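(* Let $N_w,N_d,L\ge 1$ be integers, $\sigma_i^2>0$, $N_0>0$, and let $\tilde A_{k,j}>0$ for $k\in[N_w]$, $j\in[N_d]$. Let the location $X$ be uniformly distributed a priori on $[L]$, and let the captured image $\mathbf{Y}=(Y_{k,j})$ and the global map sections $\mathbf{Y}^l=(Y^l_{k,j})$, $l\in[L]$, follow the Gaussian tile model described in the context. Then the maximum likelihood location estimate (the $\ell\in[L]$ maximizing $\Pr(X=\ell\mid \mathbf{Y}=\mathbf{y},\ \mathbf{Y}^l=\mathbf{y}^l,\ l\in[L])$) is $$\hat{\ell}=\operatorname*{arg\,min}_{\ell\in[L]}\ \sum_{k=1}^{N_w}\sum_{j=1}^{N_d}\frac{(y^\ell_{k,j}-y_{k,j})^2}{2\sigma_i^2+N_0/\tilde A_{k,j}}.$$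
   Context: Setting (vision-based vehicle localization by matching a captured road image to one of $L$ sections of a global map). Each image is a matrix of $N_w\times N_d$ tiles. The captured image is $\mathbf{Y}=\mathbf{A}+\mathbf{N}^i+\mathbf{N}^s$, i.e. $Y_{k,j}=a_{k,j}+n^i_{k,j}+n^s_{k,j}$, where $a_{k,j}$ is the underlying road signal, $n^i_{k,j}$ is intrinsic (environmental) noise, zero-mean Gaussian with variance $\sigma_i^2$, and $n^s_{k,j}$ is sensor noise, zero-mean Gaussian with variance $(\sigma^s_{k,j})^2=N_0/\tilde A_{k,j}$; here $\tilde A_{k,j}$ is the area of the projection of tile $(k,j)$ of the road onto the focal plane of the camera (for square road tiles of side $s$, camera height $h$, depression angle $\theta$, focal length $f$: $\tilde A_{k,j}=\frac{s}{2\cos\theta}\big[\frac{f^2h}{((j-1)s\cos\theta+h\sin\theta)^2}-\frac{f^2h}{(js\cos\theta+h\sin\theta)^2}\big]$). The $\ell$-th map section is $\mathbf{Y}^\ell=\mathbf{A}^\ell+\mathbf{N}^{i,\ell}$ with $n^{i,\ell}_{k,j}$ zero-mean Gaussian of variance $\sigma_i^2$; if the true location is $\ell$ then $\mathbf{A}=\mathbf{A}^\ell$. All noise terms are independent across tiles and of one another. Conditional on $X=\ell$, the captured image depends on the map only through $\mathbf{Y}^\ell$, and given $Y^\ell_{k,j}=y^\ell_{k,j}$ the underlying signal is modeled as $a^\ell_{k,j}\sim\mathcal N(y^\ell_{k,j},\sigma_i^2)$, independently across tiles. *)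

theory Defs
  imports "HOL-Probability.Probability"
begin

text \<open>Variances are given as variances; normal_density takes
  a standard deviation, hence the sqrt.
  Conditional on X = l and the map section value yl of a tile, the captured tile value is
  Y = a + n_i + n_s with a ~ N(yl, s2), n_i ~ N(0, s2), n_s ~ N(0, N0 / At) independent.\<close>

definition tile_lik :: "real \<Rightarrow> real \<Rightarrow> real \<Rightarrow> real \<Rightarrow> real \<Rightarrow> real" where
  "tile_lik s2 N0 At yl y =
     (\<integral>a. (\<integral>n. normal_density yl (sqrt s2) a * normal_density 0 (sqrt s2) n
                 * normal_density 0 (sqrt (N0 / At)) (y - a - n) \<partial>lborel) \<partial>lborel)"

text \<open>Conditional density of the whole captured image given X = l and the map
  (tiles independent), indices k in [Nw], j in [Nd].\<close>
definition image_lik ::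
  "nat \<Rightarrow> nat \<Rightarrow> real \<Rightarrow> real \<Rightarrow> (nat \<Rightarrow> nat \<Rightarrow> real) \<Rightarrow> (nat \<Rightarrow> nat \<Rightarrow> nat \<Rightarrow> real)
    \<Rightarrow> (nat \<Rightarrow> nat \<Rightarrow> real) \<Rightarrow> nat \<Rightarrow> real" where
  "image_lik Nw Nd s2 N0 At ym y l =
     (\<Prod>k\<in>{1..Nw}. \<Prod>j\<in>{1..Nd}. tile_lik s2 N0 (At k j) (ym l k j) (y k j))"

text \<open>Posterior Pr(X = l | Y = y, Y^m = ym m, m in [L]) under a uniform prior on [L]
  (Bayes' rule; the map likelihood does not depend on l and cancels).\<close>
definition posterior ::
  "nat \<Rightarrow> nat \<Rightarrow> nat \<Rightarrow> real \<Rightarrow> real \<Rightarrow> (nat \<Rightarrow> nat \<Rightarrow> real) \<Rightarrow> (nat \<Rightarrow> nat \<Rightarrow> nat \<Rightarrow> real)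
    \<Rightarrow> (nat \<Rightarrow> nat \<Rightarrow> real) \<Rightarrow> nat \<Rightarrow> real" where
  "posterior L Nw Nd s2 N0 At ym y l =
     (1 / real L * image_lik Nw Nd s2 N0 At ym y l) /
     (\<Sum>m\<in>{1..L}. 1 / real L * image_lik Nw Nd s2 N0 At ym y m)"

definition ml_metric ::
  "nat \<Rightarrow> nat \<Rightarrow> real \<Rightarrow> real \<Rightarrow> (nat \<Rightarrow> nat \<Rightarrow> real) \<Rightarrow> (nat \<Rightarrow> nat \<Rightarrow> nat \<Rightarrow> real)
    \<Rightarrow> (nat \<Rightarrow> nat \<Rightarrow> real) \<Rightarrow> nat \<Rightarrow> real" where
  "ml_metric Nw Nd s2 N0 At ym y l =
     (\<Sum>k=1..Nw. \<Sum>j=1..Nd. (ym l k j - y k j)^2 / (2 * s2 + N0 / At k j))"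

end

(* Integrating out the road signal and the intrinsic noise is a double Gaussian convolution,
   so each captured tile is Gaussian around its map value with variance 2 sigma_i^2 + N0 / At.
   The image likelihood of location l is therefore a constant independent of l times
   exp (- ml_metric l / 2), and under the uniform prior the posterior is proportional to the
   likelihood; maximizing the posterior thus amounts to minimizing the metric. *)

theory Submission
  imports Defs
begin

lemma normal_density_shift: "normal_density \<mu> \<sigma> x = normal_density 0 \<sigma> (x - \<mu>)"
  by (simp add: normal_density_def)

lemma nn_integral_normal_density_convolution:
  assumes "0 < \<sigma>" "0 < \<tau>"
  shows "(\<integral>\<^sup>+a. ennreal (normal_density \<mu> \<sigma> a * normal_density \<nu> \<tau> (x - a)) \<partial>lborel)
     = ennreal (normal_density (\<mu> + \<nu>) (sqrt (\<sigma>\<^sup>2 + \<tau>\<^sup>2)) x)"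
proof -
  let ?f = "\<lambda>a. ennreal (normal_density \<mu> \<sigma> a * normal_density \<nu> \<tau> (x - a))"
  have "integral\<^sup>N lborel ?f = (\<integral>\<^sup>+b. ?f (\<mu> + 1 * b) \<partial>lborel)"
    using nn_integral_real_affine[of ?f 1 \<mu>] by simp
  also have "\<dots> = (\<integral>\<^sup>+b. ennreal (normal_density 0 \<tau> ((x - \<mu> - \<nu>) - b) * normal_density 0 \<sigma> b) \<partial>lborel)"
    by (intro nn_integral_cong)
       (simp add: normal_density_shift[of \<mu>] normal_density_shift[of \<nu>] algebra_simps)
  also have "\<dots> = ennreal (normal_density 0 (sqrt (\<tau>\<^sup>2 + \<sigma>\<^sup>2)) (x - \<mu> - \<nu>))"
    using conv_normal_density_zero_mean[OF assms(2,1)] by (simp add: fun_eq_iff)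
  also have "\<dots> = ennreal (normal_density (\<mu> + \<nu>) (sqrt (\<sigma>\<^sup>2 + \<tau>\<^sup>2)) x)"
    by (simp add: normal_density_shift[of "\<mu> + \<nu>"] add.commute diff_diff_eq)
  finally show ?thesis .
qed

lemma integral_normal_density_convolution:
  assumes "0 < \<sigma>" "0 < \<tau>"
  shows "(\<integral>a. normal_density \<mu> \<sigma> a * normal_density \<nu> \<tau> (x - a) \<partial>lborel)
     = normal_density (\<mu> + \<nu>) (sqrt (\<sigma>\<^sup>2 + \<tau>\<^sup>2)) x"
proof -
  have "integrable lborel (\<lambda>a. normal_density \<mu> \<sigma> a * normal_density \<nu> \<tau> (x - a)) \<and>
    (\<integral>a. normal_density \<mu> \<sigma> a * normal_density \<nu> \<tau> (x - a) \<partial>lborel)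
      = normal_density (\<mu> + \<nu>) (sqrt (\<sigma>\<^sup>2 + \<tau>\<^sup>2)) x"
    by (rule nn_integral_eq_integrable[THEN iffD1])
       (auto simp: nn_integral_normal_density_convolution[OF assms])
  then show ?thesis ..
qed

lemma tile_lik_eq_normal_density:
  assumes "0 < s2" "0 < N0" "0 < At"
  shows "tile_lik s2 N0 At yl y = normal_density yl (sqrt (2 * s2 + N0 / At)) y"
proof -
  have sd_pos: "0 < sqrt s2" "0 < sqrt (N0 / At)" "0 < sqrt (s2 + N0 / At)"
    using assms by (simp_all add: add_pos_pos)
  have intrinsic_plus_sensor:
    "(\<integral>n. normal_density 0 (sqrt s2) n * normal_density 0 (sqrt (N0 / At)) (y - a - n) \<partial>lborel)
       = normal_density 0 (sqrt (s2 + N0 / At)) (y - a)" for a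
    using integral_normal_density_convolution[OF sd_pos(1,2), of 0 0 "y - a"] assms by simp
  have "tile_lik s2 N0 At yl y
      = (\<integral>a. normal_density yl (sqrt s2) a * normal_density 0 (sqrt (s2 + N0 / At)) (y - a) \<partial>lborel)"
    unfolding tile_lik_def mult.assoc integral_mult_right_zero intrinsic_plus_sensor ..
  also have "\<dots> = normal_density yl (sqrt (2 * s2 + N0 / At)) y"
    using integral_normal_density_convolution[OF sd_pos(1,3), of yl 0 y] assms sd_pos
    by (simp add: algebra_simps)
  finally show ?thesis .
qed

lemma image_lik_pos:
  assumes "0 < s2" "0 < N0" "\<And>k j. k \<in> {1..Nw} \<Longrightarrow> j \<in> {1..Nd} \<Longrightarrow> 0 < At k j"
  shows "0 < image_lik Nw Nd s2 N0 At ym y l"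
  unfolding image_lik_def
  using assms by (intro prod_pos) (simp add: tile_lik_eq_normal_density normal_density_pos add_pos_pos)

lemma image_lik_eq_exp_ml_metric:
  assumes "0 < s2" "0 < N0" "\<And>k j. k \<in> {1..Nw} \<Longrightarrow> j \<in> {1..Nd} \<Longrightarrow> 0 < At k j"
  shows "image_lik Nw Nd s2 N0 At ym y l =
    (\<Prod>k\<in>{1..Nw}. \<Prod>j\<in>{1..Nd}. 1 / sqrt (2 * pi * (2 * s2 + N0 / At k j)))
    * exp (- ml_metric Nw Nd s2 N0 At ym y l / 2)"
proof -
  have "image_lik Nw Nd s2 N0 At ym y l = (\<Prod>k\<in>{1..Nw}. \<Prod>j\<in>{1..Nd}.
      1 / sqrt (2 * pi * (2 * s2 + N0 / At k j))
      * exp (- ((ym l k j - y k j)^2 / (2 * s2 + N0 / At k j)) / 2))"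
    unfolding image_lik_def
  proof (intro prod.cong refl)
    fix k j assume "k \<in> {1..Nw}" "j \<in> {1..Nd}"
    then have "0 < At k j" by (rule assms(3))
    with assms(1,2) have "0 < 2 * s2 + N0 / At k j" by (simp add: add_pos_pos)
    with assms(1,2) \<open>0 < At k j\<close> show "tile_lik s2 N0 (At k j) (ym l k j) (y k j) =
      1 / sqrt (2 * pi * (2 * s2 + N0 / At k j))
      * exp (- ((ym l k j - y k j)^2 / (2 * s2 + N0 / At k j)) / 2)"
      by (simp add: tile_lik_eq_normal_density normal_density_def power2_commute[of "y k j"])
  qed
  also have "\<dots> = (\<Prod>k\<in>{1..Nw}. \<Prod>j\<in>{1..Nd}. 1 / sqrt (2 * pi * (2 * s2 + N0 / At k j)))
    * exp (\<Sum>k=1..Nw. \<Sum>j=1..Nd. - ((ym l k j - y k j)^2 / (2 * s2 + N0 / At k j)) / 2)"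
    by (simp only: exp_sum finite_atLeastAtMost prod.distrib)
  also have "(\<Sum>k=1..Nw. \<Sum>j=1..Nd. - ((ym l k j - y k j)^2 / (2 * s2 + N0 / At k j)) / 2)
      = - ml_metric Nw Nd s2 N0 At ym y l / 2"
    unfolding ml_metric_def by (simp add: sum_negf sum_divide_distrib)
  finally show ?thesis .
qed

lemma image_lik_le_iff_ml_metric_ge:
  assumes "0 < s2" "0 < N0" "\<And>k j. k \<in> {1..Nw} \<Longrightarrow> j \<in> {1..Nd} \<Longrightarrow> 0 < At k j"
  shows "image_lik Nw Nd s2 N0 At ym y m \<le> image_lik Nw Nd s2 N0 At ym y l
     \<longleftrightarrow> ml_metric Nw Nd s2 N0 At ym y l \<le> ml_metric Nw Nd s2 N0 At ym y m"
proof -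
  define C where "C = (\<Prod>k\<in>{1..Nw}. \<Prod>j\<in>{1..Nd}. 1 / sqrt (2 * pi * (2 * s2 + N0 / At k j)))"
  have "0 < C"
    unfolding C_def using assms by (intro prod_pos) (simp add: add_pos_pos)
  moreover have "image_lik Nw Nd s2 N0 At ym y l' = C * exp (- ml_metric Nw Nd s2 N0 At ym y l' / 2)" for l'
    unfolding C_def by (rule image_lik_eq_exp_ml_metric) (fact assms)+
  ultimately show ?thesis
    by (simp add: mult_le_cancel_left_pos)
qed

lemma posterior_le_iff_image_lik_le:
  assumes "1 \<le> L" "\<And>m. m \<in> {1..L} \<Longrightarrow> 0 < image_lik Nw Nd s2 N0 At ym y m"
  shows "posterior L Nw Nd s2 N0 At ym y m \<le> posterior L Nw Nd s2 N0 At ym y l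
     \<longleftrightarrow> image_lik Nw Nd s2 N0 At ym y m \<le> image_lik Nw Nd s2 N0 At ym y l"
proof -
  define S where "S = (\<Sum>m\<in>{1..L}. 1 / real L * image_lik Nw Nd s2 N0 At ym y m)"
  have "0 < S"
    unfolding S_def using assms by (intro sum_pos) auto
  then have "0 < real L * S"
    using assms(1) by simp
  then show ?thesis
    unfolding posterior_def S_def[symmetric] by (simp add: divide_le_cancel)
qed

theorem proposition1:
  fixes Nw Nd L :: nat and s2 N0 :: real
    and At :: "nat \<Rightarrow> nat \<Rightarrow> real"
    and ym :: "nat \<Rightarrow> nat \<Rightarrow> nat \<Rightarrow> real"
    and y :: "nat \<Rightarrow> nat \<Rightarrow> real"
    and l :: nat
  assumes "Nw \<ge> 1" "Nd \<ge> 1" "L \<ge> 1" "s2 > 0" "N0 > 0"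
    and "\<And>k j. k \<in> {1..Nw} \<Longrightarrow> j \<in> {1..Nd} \<Longrightarrow> At k j > 0"
    and "l \<in> {1..L}"
  shows "(\<forall>m\<in>{1..L}. posterior L Nw Nd s2 N0 At ym y m \<le> posterior L Nw Nd s2 N0 At ym y l)
     \<longleftrightarrow> (\<forall>m\<in>{1..L}. ml_metric Nw Nd s2 N0 At ym y l \<le> ml_metric Nw Nd s2 N0 At ym y m)"
proof -
  have lik_pos: "0 < image_lik Nw Nd s2 N0 At ym y m" for m
    by (rule image_lik_pos) (fact assms)+
  have lik_le_iff: "image_lik Nw Nd s2 N0 At ym y m \<le> image_lik Nw Nd s2 N0 At ym y l
      \<longleftrightarrow> ml_metric Nw Nd s2 N0 At ym y l \<le> ml_metric Nw Nd s2 N0 At ym y m" for m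
    by (rule image_lik_le_iff_ml_metric_ge) (fact assms)+
  have "posterior L Nw Nd s2 N0 At ym y m \<le> posterior L Nw Nd s2 N0 At ym y l
      \<longleftrightarrow> ml_metric Nw Nd s2 N0 At ym y l \<le> ml_metric Nw Nd s2 N0 At ym y m" for m
    unfolding lik_le_iff[symmetric] by (intro posterior_le_iff_image_lik_le \<open>L \<ge> 1\<close> lik_pos)
  then show ?thesis
    by blast
qed

end
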